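(* For every integer $k\ge1$, the maps $F:\mathbb{F}_q^k\to\mathbb{F}_q^k$ and $G:\mathbb{F}_q^k\to\mathbb{F}_q^k$ are inverse to one another; in particular both are bijections of $\mathbb{F}_q^k$.
   Context: Let $q>2$ be a prime power and $\mathbb{F}_q$ the field with $q$ elements; for $c\in\mathbb{F}_q$, $c^{q-2}$ denotes the field element (so $0^{q-2}=0$ and $c^{q-2}=c^{-1}$ for $c\neq0$). The map $F:\mathbb{F}_q^k\to\mathbb{F}_q^k$ sends $(a_1,\dots,a_k)$ to $(b_1,\dots,b_k)$ where $b_i:=c_{i,i}$, and for each $1\le i\le k$ the elements $c_{i,j}$ ($0\le j\le i$) are defined by $c_{i,0}:=0$ and $c_{i,j}:=c_{i,j-1}^{q-2}+a_{i-j+1}$. For $2\le\ell\le k$ let $\Phi_\ell:\mathbb{F}_q^\ell\to\mathbb{F}_q^{\ell-1}$ send $(e_1,\dots,e_\ell)$ to $((e_2-e_1)^{q-2},(e_3-e_1)^{q-2},\dots,(e_\ell-e_1)^{q-2})$. The map $G:\mathbb{F}_q^k\to\mathbb{F}_q^k$ sends $(b_1,\dots,b_k)$ to $(a_1,\dots,a_k)$ where $a_i$ is the first entry of $\Phi_{k-i+2}\circ\Phi_{k-i+3}\circ\cdots\circ\Phi_k(b_1,\dots,b_k)\in\mathbb{F}_q^{k-i+1}$ (for $i=1$ this composite is the identity, so $a_1=b_1$). *)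

theory Defs
  imports Main "HOL-Library.Cardinality"
begin

text \<open>The finite field F_q is modelled by a type 'a of class field and finite; q = CARD('a).
 Any finite field has prime-power order, so "q a prime power" is automatic.
 Elements of F_q^k are lists of length k; the paper's 1-indexed a_i is the list entry a ! (i - 1).\<close>

definition finv :: "'a::{field,finite} \<Rightarrow> 'a" where
  "finv c = c ^ (CARD('a) - 2)"

fun cF :: "'a::{field,finite} list \<Rightarrow> nat \<Rightarrow> nat \<Rightarrow> 'a" where
  "cF a i 0 = 0"
| "cF a i (Suc j) = finv (cF a i j) + a ! (i - Suc j)"

definition mapF :: "'a::{field,finite} list \<Rightarrow> 'a list" where
  "mapF a = map (\<lambda>i. cF a i i) [1..<length a + 1]"

fun Phi :: "'a::{field,finite} list \<Rightarrow> 'a list" where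
  "Phi [] = []"
| "Phi (e # es) = map (\<lambda>x. finv (x - e)) es"

text \<open>a_i = first entry of Phi_{k-i+2} o ... o Phi_k (b), i.e. i-1 applications of Phi.\<close>
definition mapG :: "'a::{field,finite} list \<Rightarrow> 'a list" where
  "mapG b = map (\<lambda>i. hd ((Phi ^^ (i - 1)) b)) [1..<length b + 1]"

end

theory Submission
  imports Defs
begin

text \<open>By Fermat's little theorem c^(q-2) is the field inverse of c (with 0 mapped to 0), so one
  step of the recursion for F reads c \<mapsto> a + 1/c and F(a_1, ..., a_k) is a_1 followed by
  a_1 + 1/y for the entries y of F(a_2, ..., a_k).  Phi undoes exactly this step: subtracting the
  head a_1 and inverting returns F(a_2, ..., a_k), while G reads off the head and recurses on Phi.\<close>

lemma power_card_eq_self: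
  fixes x :: "'a::{field,finite}"
  shows "x ^ CARD('a) = x"
proof (cases "x = 0")
  case False
  let ?U = "UNIV - {0::'a}"
  have "(\<Prod>y\<in>?U. x * y) = (\<Prod>y\<in>?U. y)"
    by (rule prod.reindex_bij_witness[of _ "\<lambda>y. y / x" "\<lambda>y. x * y"]) (use False in auto)
  then have "x ^ card ?U * \<Prod>?U = 1 * \<Prod>?U"
    by (simp add: prod.distrib)
  then have "x ^ (CARD('a) - 1) = 1"
    by (simp add: card_Diff_singleton)
  moreover have "CARD('a) = Suc (CARD('a) - 1)"
    using finite_UNIV_card_ge_0 by simp
  ultimately show ?thesis
    by (metis power_Suc mult_1_right)
qed (simp add: finite_UNIV_card_ge_0)

lemma finv_eq_inverse:
  assumes "CARD('a::{field,finite}) > 2"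
  shows "finv (x::'a) = inverse x"
proof (cases "x = 0")
  case False
  have "finv x * x * x = x ^ (CARD('a) - 2 + 2)"
    by (simp only: finv_def power_add power2_eq_square mult.assoc)
  also have "CARD('a) - 2 + 2 = CARD('a)"
    using assms by simp
  also have "x ^ CARD('a) = x"
    by (rule power_card_eq_self)
  finally have "finv x * x * x = x" .
  then have "finv x * x = 1"
    using False by simp
  then show ?thesis
    using False by (simp add: field_simps)
next
  case True
  then show ?thesis
    using assms by (simp add: finv_def)
qed

lemma cF_Cons: "j \<le> i \<Longrightarrow> cF (x # xs) (Suc i) j = cF xs i j"
  by (induction j) (auto simp: Suc_diff_Suc)

lemma mapF_conv_map_upt: "mapF a = map (\<lambda>i. cF a (Suc i) (Suc i)) [0..<length a]"
  by (simp add: mapF_def map_Suc_upt[symmetric] del: upt_Suc)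

lemma mapG_conv_map_upt: "mapG b = map (\<lambda>i. hd ((Phi ^^ i) b)) [0..<length b]"
  by (simp add: mapG_def map_Suc_upt[symmetric] del: upt_Suc)

lemma length_mapF [simp]: "length (mapF a) = length a"
  by (simp add: mapF_conv_map_upt)

lemma length_mapG [simp]: "length (mapG b) = length b"
  by (simp add: mapG_conv_map_upt)

lemma mapF_Nil [simp]: "mapF [] = []"
  by (simp add: mapF_def)

lemma mapG_Nil [simp]: "mapG [] = []"
  by (simp add: mapG_def)

lemma mapF_Cons:
  assumes "CARD('a::{field,finite}) > 2"
  shows "mapF (x # xs) = x # map (\<lambda>y. x + inverse y) (mapF (xs::'a list))"
proof -
  have "mapF (x # xs) = map (\<lambda>i. cF (x # xs) (Suc i) (Suc i)) (0 # map Suc [0..<length xs])"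
    by (simp only: mapF_conv_map_upt length_Cons upt_conv_Cons map_Suc_upt zero_less_Suc)
  then show ?thesis
    by (simp add: mapF_conv_map_upt cF_Cons finv_eq_inverse[OF assms] add.commute del: upt_Suc)
qed

lemma mapG_Cons: "mapG (e # es) = e # mapG (Phi (e # es))"
proof -
  have "mapG (e # es) = map (\<lambda>i. hd ((Phi ^^ i) (e # es))) (0 # map Suc [0..<length es])"
    by (simp only: mapG_conv_map_upt length_Cons upt_conv_Cons map_Suc_upt zero_less_Suc)
  also have "\<dots> = e # map (\<lambda>i. hd ((Phi ^^ i) (Phi (e # es)))) [0..<length es]"
    by (simp add: funpow_Suc_right del: Phi.simps upt_Suc funpow.simps)
  finally show ?thesis
    by (simp add: mapG_conv_map_upt del: upt_Suc)
qed

lemma Phi_mapF_Cons: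
  assumes "CARD('a::{field,finite}) > 2"
  shows "Phi (mapF (x # xs)) = mapF (xs::'a list)"
  by (simp add: mapF_Cons[OF assms] finv_eq_inverse[OF assms] comp_def)

lemma mapG_mapF:
  assumes "CARD('a::{field,finite}) > 2"
  shows "mapG (mapF a) = (a::'a list)"
proof (induction a)
  case (Cons x xs)
  have "mapG (mapF (x # xs)) = x # mapG (Phi (mapF (x # xs)))"
    by (simp only: mapF_Cons[OF assms] mapG_Cons)
  then show ?case
    using Cons by (simp only: Phi_mapF_Cons[OF assms])
qed simp

lemma mapF_mapG:
  assumes "CARD('a::{field,finite}) > 2"
  shows "mapF (mapG b) = (b::'a list)"
proof (induction "length b" arbitrary: b)
  case (Suc n)
  then obtain e es where b: "b = e # es"
    by (cases b) auto
  have "mapF (mapG (Phi b)) = Phi b"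
    using Suc b by simp
  then have "mapF (mapG b) = e # map (\<lambda>y. e + inverse y) (Phi b)"
    using b by (simp add: mapG_Cons mapF_Cons[OF assms] del: Phi.simps)
  also have "\<dots> = b"
    using b by (simp add: map_idI finv_eq_inverse[OF assms])
  finally show ?case .
qed simp

theorem theorem3p1:
  fixes k :: nat
  assumes "CARD('a::{field,finite}) > 2"
    and "k \<ge> 1"
  shows "(\<forall>a::'a list. length a = k \<longrightarrow> length (mapF a) = k \<and> mapG (mapF a) = a)
       \<and> (\<forall>b::'a list. length b = k \<longrightarrow> length (mapG b) = k \<and> mapF (mapG b) = b)
       \<and> bij_betw (mapF :: 'a list \<Rightarrow> 'a list) {x. length x = k} {x. length x = k}
       \<and> bij_betw (mapG :: 'a list \<Rightarrow> 'a list) {x. length x = k} {x. length x = k}"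
proof -
  note GF = mapG_mapF[OF assms(1)] and FG = mapF_mapG[OF assms(1)]
  have "bij_betw (mapF :: 'a list \<Rightarrow> 'a list) {x. length x = k} {x. length x = k}"
    by (rule bij_betw_byWitness[where f'=mapG]) (auto simp: GF FG)
  moreover have "bij_betw (mapG :: 'a list \<Rightarrow> 'a list) {x. length x = k} {x. length x = k}"
    by (rule bij_betw_byWitness[where f'=mapF]) (auto simp: GF FG)
  ultimately show ?thesis
    by (simp add: GF FG)
qed

end
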